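(* Let $K>0$. There exist $K'>0$ and $\epsilon_0>0$ such that for every $0<\epsilon\leq\epsilon_0$ and every 4-tensor $A$ satisfying condition A1 with parameter $\epsilon$ and constant $K$, there exist bounded invertible operators $G_h,G_v$ on $V$ such that the gauge-transformed tensor $\tilde A$ satisfies $|\tilde A_{0000}-1|\leq K'\epsilon^2$ and $\tilde A/\tilde A_{0000}$ satisfies condition A2 with parameter $\epsilon$ and constant $K'$.
   Context: $V$ is a real separable infinite-dimensional Hilbert space with orthonormal basis $(e_i)_{i\geq0}$. A 4-tensor is an array $A=(A_{ijkl})_{i,j,k,l\geq0}$ of reals with finite Hilbert–Schmidt norm $\|A\|=(\sum A_{ijkl}^2)^{1/2}$; indices belong to the right, top, left, bottom legs respectively. $A_*$ is the tensor with $(A_* )_{0000}=1$ and all other components zero. An index is called nonzero if it is $\geq1$. Condition A1 (parameter $\epsilon$, constant $K$): $A_{0000}=1$ and $\|A-A_*\|\leq K\epsilon$. Condition A2 (parameter $\epsilon$, constant $K$): A1 holds, and the tensor formed by the components of $A$ with exactly one nonzero index (components $A_{x000},A_{0x00},A_{00x0},A_{000x}$, $x\geq1$; all others set to zero) has norm $\leq K\epsilon^2$. Gauge transform of $A$ by bounded invertible $G_h,G_v$ on $V$ (matrix entries in the basis $(e_i)$): $\tilde A_{ijkl}=\sum_{i',j',k',l'}(G_h)_{i'i}(G_v)_{j'j}(G_h^{-1})_{kk'}(G_v^{-1})_{ll'}A_{i'j'k'l'}$. *)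

theory Defs
  imports "HOL-Analysis.Analysis"
begin

text \<open>The Hilbert space V is realised as l2 over the index set nat, i.e. square-summable
  real sequences; e_i is the i-th unit sequence.  Operators on V are modelled as maps
  (nat \<Rightarrow> real) \<Rightarrow> (nat \<Rightarrow> real), only their behaviour on l2 matters.\<close>

definition is_l2 :: "(nat \<Rightarrow> real) \<Rightarrow> bool" where
  "is_l2 x \<longleftrightarrow> (\<lambda>i. (x i)\<^sup>2) summable_on UNIV"

definition l2norm :: "(nat \<Rightarrow> real) \<Rightarrow> real" where
  "l2norm x = sqrt (\<Sum>\<^sub>\<infinity>i. (x i)\<^sup>2)"

definition unit_vec :: "nat \<Rightarrow> nat \<Rightarrow> real" where
  "unit_vec j = (\<lambda>k. if k = j then 1 else 0)"

definition bounded_op :: "((nat \<Rightarrow> real) \<Rightarrow> (nat \<Rightarrow> real)) \<Rightarrow> bool" where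
  "bounded_op G \<longleftrightarrow>
     (\<forall>x. is_l2 x \<longrightarrow> is_l2 (G x)) \<and>
     (\<forall>x y a b. is_l2 x \<longrightarrow> is_l2 y \<longrightarrow>
        G (\<lambda>i. a * x i + b * y i) = (\<lambda>i. a * G x i + b * G y i)) \<and>
     (\<exists>C. \<forall>x. is_l2 x \<longrightarrow> l2norm (G x) \<le> C * l2norm x)"

definition is_inverse_op :: "((nat \<Rightarrow> real) \<Rightarrow> (nat \<Rightarrow> real)) \<Rightarrow> ((nat \<Rightarrow> real) \<Rightarrow> (nat \<Rightarrow> real)) \<Rightarrow> bool" where
  "is_inverse_op G H \<longleftrightarrow> bounded_op H \<and> (\<forall>x. is_l2 x \<longrightarrow> H (G x) = x \<and> G (H x) = x)"

definition invertible_op :: "((nat \<Rightarrow> real) \<Rightarrow> (nat \<Rightarrow> real)) \<Rightarrow> bool" where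
  "invertible_op G \<longleftrightarrow> bounded_op G \<and> (\<exists>H. is_inverse_op G H)"

definition op_inv :: "((nat \<Rightarrow> real) \<Rightarrow> (nat \<Rightarrow> real)) \<Rightarrow> ((nat \<Rightarrow> real) \<Rightarrow> (nat \<Rightarrow> real))" where
  "op_inv G = (SOME H. is_inverse_op G H)"

definition op_mat :: "((nat \<Rightarrow> real) \<Rightarrow> (nat \<Rightarrow> real)) \<Rightarrow> nat \<Rightarrow> nat \<Rightarrow> real" where
  "op_mat G i j = G (unit_vec j) i"

type_synonym tensor4 = "nat \<Rightarrow> nat \<Rightarrow> nat \<Rightarrow> nat \<Rightarrow> real"

definition hs_tensor :: "tensor4 \<Rightarrow> bool" where
  "hs_tensor A \<longleftrightarrow> (\<lambda>(i,j,k,l). (A i j k l)\<^sup>2) summable_on (UNIV :: (nat \<times> nat \<times> nat \<times> nat) set)"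

definition hs_norm :: "tensor4 \<Rightarrow> real" where
  "hs_norm A = sqrt (\<Sum>\<^sub>\<infinity>(i,j,k,l)\<in>(UNIV :: (nat \<times> nat \<times> nat \<times> nat) set). (A i j k l)\<^sup>2)"

definition A_star :: tensor4 where
  "A_star i j k l = (if i = 0 \<and> j = 0 \<and> k = 0 \<and> l = 0 then 1 else 0)"

definition cond_A1 :: "real \<Rightarrow> real \<Rightarrow> tensor4 \<Rightarrow> bool" where
  "cond_A1 \<epsilon> K A \<longleftrightarrow> hs_tensor A \<and> A 0 0 0 0 = 1 \<and>
     hs_norm (\<lambda>i j k l. A i j k l - A_star i j k l) \<le> K * \<epsilon>"

definition one_nonzero_part :: "tensor4 \<Rightarrow> tensor4" where
  "one_nonzero_part A i j k l =
     (if of_bool (i \<noteq> 0) + of_bool (j \<noteq> 0) + of_bool (k \<noteq> 0) + of_bool (l \<noteq> 0) = (1::nat)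
      then A i j k l else 0)"

definition cond_A2 :: "real \<Rightarrow> real \<Rightarrow> tensor4 \<Rightarrow> bool" where
  "cond_A2 \<epsilon> K A \<longleftrightarrow> cond_A1 \<epsilon> K A \<and> hs_norm (one_nonzero_part A) \<le> K * \<epsilon>\<^sup>2"

definition gauge :: "((nat \<Rightarrow> real) \<Rightarrow> (nat \<Rightarrow> real)) \<Rightarrow> ((nat \<Rightarrow> real) \<Rightarrow> (nat \<Rightarrow> real)) \<Rightarrow> tensor4 \<Rightarrow> tensor4" where
  "gauge Gh Gv A i j k l =
     (\<Sum>\<^sub>\<infinity>i'. \<Sum>\<^sub>\<infinity>j'. \<Sum>\<^sub>\<infinity>k'. \<Sum>\<^sub>\<infinity>l'.
        op_mat Gh i' i * op_mat Gv j' j * op_mat (op_inv Gh) k k' * op_mat (op_inv Gv) l l'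
        * A i' j' k' l')"

end

theory Submission
  imports Defs
begin

text \<open>
  Write \<open>A = A_star + B\<close> with \<open>\<parallel>B\<parallel> \<le> K\<epsilon>\<close>; condition A2 can only fail through the components
  of \<open>B\<close> with one nonzero index. Take \<open>G\<^sub>h = (1 + b e\<^sub>0\<^sup>T) (1 + e\<^sub>0 a\<^sup>T)\<close> with
  \<open>a\<^sub>x = -A\<^sub>x\<^sub>0\<^sub>0\<^sub>0\<close>, \<open>b\<^sub>x = A\<^sub>0\<^sub>0\<^sub>x\<^sub>0\<close>, and \<open>G\<^sub>v\<close> likewise from the top and bottom legs.
  The gauge transform of the product tensor \<open>A_star\<close> is again a product tensor, whose
  one-nonzero components are exactly those of \<open>B\<close> with the opposite sign, up to factors
  \<open>1 + O(\<epsilon>\<^sup>2)\<close>. All four matrices are \<open>O(\<epsilon>)\<close>-perturbations of the identity in Frobenius norm,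
  so the transform moves \<open>B\<close> only by \<open>O(\<epsilon>) \<parallel>B\<parallel> = O(\<epsilon>\<^sup>2)\<close>. Hence the transformed tensor has
  corner entry \<open>1 + O(\<epsilon>\<^sup>2)\<close>, stays \<open>O(\<epsilon>)\<close>-close to \<open>A_star\<close>, and has one-nonzero part of
  size \<open>O(\<epsilon>\<^sup>2)\<close>; dividing by the corner entry preserves this.

  The vectors \<open>a, b\<close> are truncated at an index \<open>N\<close> beyond which the one-nonzero part of \<open>A\<close>
  has norm at most \<open>(K\<epsilon>)\<^sup>2\<close>. Then the gauge transform is a finite sum on every index box
  \<open>{..R}\<^sup>4\<close> with \<open>R \<ge> N\<close>, all estimates are made on these boxes, and they pass to the
  Hilbert-Schmidt norm as \<open>R\<close> grows.
\<close>

section \<open>Square-summable families\<close>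

lemma L2_set_le_sqrt_infsum:
  fixes f :: "'a \<Rightarrow> real"
  assumes "(\<lambda>x. (f x)\<^sup>2) summable_on UNIV" "finite F"
  shows "L2_set f F \<le> sqrt (\<Sum>\<^sub>\<infinity>x. (f x)\<^sup>2)"
  unfolding L2_set_def by (intro real_sqrt_le_mono finite_sum_le_infsum assms) auto

lemma summable_sqrt_infsum_le_if_L2_set_le:
  fixes f :: "'a \<Rightarrow> real"
  assumes "\<And>F. finite F \<Longrightarrow> L2_set f F \<le> C"
  shows "(\<lambda>x. (f x)\<^sup>2) summable_on UNIV \<and> sqrt (\<Sum>\<^sub>\<infinity>x. (f x)\<^sup>2) \<le> C"
proof -
  have "0 \<le> C" using assms[of "{}"] by simp
  have sum_le: "(\<Sum>x\<in>F. (f x)\<^sup>2) \<le> C\<^sup>2" if "finite F" for F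
  proof -
    have "(\<Sum>x\<in>F. (f x)\<^sup>2) = (L2_set f F)\<^sup>2"
      unfolding L2_set_def by (simp add: sum_nonneg)
    also have "\<dots> \<le> C\<^sup>2" by (rule power_mono[OF assms[OF that] L2_set_nonneg])
    finally show ?thesis .
  qed
  have summable: "(\<lambda>x. (f x)\<^sup>2) summable_on UNIV"
    by (rule nonneg_bdd_above_summable_on) (auto intro!: bdd_aboveI2 sum_le)
  have "(\<Sum>\<^sub>\<infinity>x. (f x)\<^sup>2) \<le> C\<^sup>2"
    by (rule infsum_le_finite_sums[OF summable]) (auto intro: sum_le)
  with \<open>0 \<le> C\<close> summable show ?thesis by (simp add: real_le_lsqrt)
qed

lemma L2_set_abs_mono:
  assumes "\<And>i. i \<in> K \<Longrightarrow> \<bar>f i\<bar> \<le> \<bar>g i\<bar>"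
  shows "L2_set f K \<le> L2_set g K"
  unfolding L2_set_def using assms by (intro real_sqrt_le_mono sum_mono) (simp add: abs_le_square_iff)

lemma L2_set_scale: "L2_set (\<lambda>i. c * f i) K = \<bar>c\<bar> * L2_set f K"
  unfolding L2_set_def
  by (simp add: power_mult_distrib real_sqrt_mult flip: sum_distrib_left)

lemma l2norm_ge_L2_set: "is_l2 x \<Longrightarrow> finite F \<Longrightarrow> L2_set x F \<le> l2norm x"
  unfolding is_l2_def l2norm_def by (rule L2_set_le_sqrt_infsum)

lemma is_l2_l2norm_le_if_L2_set_le:
  "(\<And>F. finite F \<Longrightarrow> L2_set x F \<le> C) \<Longrightarrow> is_l2 x \<and> l2norm x \<le> C"
  unfolding is_l2_def l2norm_def by (rule summable_sqrt_infsum_le_if_L2_set_le)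

lemma abs_le_l2norm: "is_l2 x \<Longrightarrow> \<bar>x m\<bar> \<le> l2norm x"
  using l2norm_ge_L2_set[of x "{m}"] by (simp add: L2_set_def)

lemma l2norm_nonneg: "0 \<le> l2norm x"
  unfolding l2norm_def by (simp add: infsum_nonneg)

lemma is_l2_if_finite_support:
  assumes "\<And>i. N < i \<Longrightarrow> x i = 0"
  shows "is_l2 x"
proof -
  have "L2_set x F \<le> L2_set x {..N}" if "finite F" for F
  proof -
    have "L2_set x F = L2_set x (F \<inter> {..N})"
      unfolding L2_set_def using that assms
      by (intro arg_cong[where f=sqrt] sum.mono_neutral_right) (auto simp: not_le)
    also have "\<dots> \<le> L2_set x {..N}"
      unfolding L2_set_def by (intro real_sqrt_le_mono sum_mono2) auto
    finally show ?thesis .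
  qed
  thus ?thesis using is_l2_l2norm_le_if_L2_set_le by blast
qed

lemma is_l2_unit_vec: "is_l2 (unit_vec j)"
  by (rule is_l2_if_finite_support[of j]) (simp add: unit_vec_def)

section \<open>Rank-one perturbations of the identity\<close>

definition rank1_update :: "nat \<Rightarrow> (nat \<Rightarrow> real) \<Rightarrow> (nat \<Rightarrow> real) \<Rightarrow> real \<Rightarrow> (nat \<Rightarrow> real) \<Rightarrow> nat \<Rightarrow> real" where
  "rank1_update N u v c x = (\<lambda>i. x i + c * (\<Sum>m\<le>N. u m * x m) * v i)"

lemma rank1_update_bound:
  assumes "is_l2 v" "is_l2 x"
  shows "is_l2 (rank1_update N u v c x) \<and>
         l2norm (rank1_update N u v c x) \<le> (1 + \<bar>c\<bar> * (\<Sum>m\<le>N. \<bar>u m\<bar>) * l2norm v) * l2norm x"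
proof -
  define s where "s = c * (\<Sum>m\<le>N. u m * x m)"
  have "\<bar>\<Sum>m\<le>N. u m * x m\<bar> \<le> (\<Sum>m\<le>N. \<bar>u m\<bar> * \<bar>x m\<bar>)"
    by (rule order_trans[OF sum_abs]) (simp add: abs_mult)
  also have "\<dots> \<le> (\<Sum>m\<le>N. \<bar>u m\<bar> * l2norm x)"
    by (intro sum_mono mult_left_mono abs_le_l2norm assms) auto
  finally have s_bound: "\<bar>s\<bar> \<le> \<bar>c\<bar> * (\<Sum>m\<le>N. \<bar>u m\<bar>) * l2norm x"
    unfolding s_def abs_mult mult.assoc sum_distrib_right by (intro mult_left_mono) auto
  have "L2_set (rank1_update N u v c x) F \<le> (1 + \<bar>c\<bar> * (\<Sum>m\<le>N. \<bar>u m\<bar>) * l2norm v) * l2norm x"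
    if "finite F" for F
  proof -
    have "L2_set (rank1_update N u v c x) F = L2_set (\<lambda>i. x i + s * v i) F"
      unfolding rank1_update_def s_def by (simp add: mult.assoc)
    also have "\<dots> \<le> L2_set x F + \<bar>s\<bar> * L2_set v F"
      using L2_set_triangle_ineq[of x "\<lambda>i. s * v i" F] by (simp add: L2_set_scale)
    also have "\<dots> \<le> l2norm x + (\<bar>c\<bar> * (\<Sum>m\<le>N. \<bar>u m\<bar>) * l2norm x) * l2norm v"
      using s_bound l2norm_ge_L2_set[OF _ that] assms
      by (intro add_mono mult_mono) (auto simp: l2norm_nonneg)
    finally show ?thesis by (simp add: algebra_simps)
  qed
  thus ?thesis using is_l2_l2norm_le_if_L2_set_le by blast
qed

lemma bounded_op_rank1_update: "is_l2 v \<Longrightarrow> bounded_op (rank1_update N u v c)"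
proof -
  have "rank1_update N u v c (\<lambda>i. a * x i + b * y i)
        = (\<lambda>i. a * rank1_update N u v c x i + b * rank1_update N u v c y i)" for a b x y
    unfolding rank1_update_def
    by (simp add: fun_eq_iff sum.distrib sum_distrib_left ring_distribs mult_ac)
  thus "is_l2 v \<Longrightarrow> ?thesis" unfolding bounded_op_def using rank1_update_bound by blast
qed

lemma rank1_update_cancel:
  assumes "(\<Sum>m\<le>N. u m * v m) = 0"
  shows "rank1_update N u v (-c) (rank1_update N u v c x) = x"
proof -
  have "(\<Sum>m\<le>N. u m * (x m + c * (\<Sum>m\<le>N. u m * x m) * v m))
      = (\<Sum>m\<le>N. u m * x m) + c * (\<Sum>m\<le>N. u m * x m) * (\<Sum>m\<le>N. u m * v m)"
    by (simp add: sum.distrib sum_distrib_left ring_distribs mult.left_commute)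
  with assms show ?thesis by (simp add: rank1_update_def fun_eq_iff)
qed

lemma bounded_op_comp:
  assumes "bounded_op F" "bounded_op G"
  shows "bounded_op (\<lambda>x. F (G x))"
proof -
  obtain C1 C2 where C1: "\<And>x. is_l2 x \<Longrightarrow> l2norm (F x) \<le> C1 * l2norm x"
    and C2: "\<And>x. is_l2 x \<Longrightarrow> l2norm (G x) \<le> C2 * l2norm x"
    using assms unfolding bounded_op_def by metis
  have l2: "\<And>x. is_l2 x \<Longrightarrow> is_l2 (G x)" "\<And>x. is_l2 x \<Longrightarrow> is_l2 (F x)"
    using assms unfolding bounded_op_def by blast+
  have "l2norm (F (G x)) \<le> (\<bar>C1\<bar> * \<bar>C2\<bar>) * l2norm x" if "is_l2 x" for x
  proof -
    have "l2norm (F (G x)) \<le> \<bar>C1\<bar> * l2norm (G x)"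
      using C1[OF l2(1)[OF that]] mult_right_mono[OF abs_ge_self l2norm_nonneg, of C1 "G x"]
      by linarith
    also have "\<dots> \<le> \<bar>C1\<bar> * (\<bar>C2\<bar> * l2norm x)"
      using C2[OF that] mult_right_mono[OF abs_ge_self l2norm_nonneg, of C2 x]
      by (intro mult_left_mono) auto
    finally show ?thesis by simp
  qed
  moreover have "F (G (\<lambda>i. a * x i + b * y i)) = (\<lambda>i. a * F (G x) i + b * F (G y) i)"
    if "is_l2 x" "is_l2 y" for x y a b
  proof -
    have "G (\<lambda>i. a * x i + b * y i) = (\<lambda>i. a * G x i + b * G y i)"
      using assms(2) that unfolding bounded_op_def by blast
    moreover have "F (\<lambda>i. a * G x i + b * G y i) = (\<lambda>i. a * F (G x) i + b * F (G y) i)"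
      using assms(1) l2 that unfolding bounded_op_def by blast
    ultimately show ?thesis by simp
  qed
  ultimately show ?thesis unfolding bounded_op_def using l2 by blast
qed

lemma invertible_op_if_inverse:
  assumes "bounded_op G" "bounded_op H" "\<And>x. H (G x) = x" "\<And>x. G (H x) = x"
  shows "invertible_op G" "is_l2 y \<Longrightarrow> op_inv G y = H y"
proof -
  have inv: "is_inverse_op G H" unfolding is_inverse_op_def using assms by blast
  thus "invertible_op G" unfolding invertible_op_def using assms by blast
  have op_inv: "is_inverse_op G (op_inv G)" unfolding op_inv_def by (rule someI[of _ H]) (rule inv)
  assume "is_l2 y"
  hence "is_l2 (H y)" using assms(2) unfolding bounded_op_def by blast
  hence "op_inv G (G (H y)) = H y" using op_inv unfolding is_inverse_op_def by blast
  thus "op_inv G y = H y" using assms(4) by simp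
qed

definition kron :: "nat \<Rightarrow> nat \<Rightarrow> real" where
  "kron i j = (if i = j then 1 else 0)"

text \<open>\<open>gauge_op N a b\<close> is \<open>(1 + b e\<^sub>0\<^sup>T) (1 + e\<^sub>0 a\<^sup>T)\<close>, the pairing with \<open>a\<close> truncated at \<open>N\<close>.\<close>

definition gauge_op :: "nat \<Rightarrow> (nat \<Rightarrow> real) \<Rightarrow> (nat \<Rightarrow> real) \<Rightarrow> (nat \<Rightarrow> real) \<Rightarrow> nat \<Rightarrow> real" where
  "gauge_op N a b = (\<lambda>x. rank1_update N (unit_vec 0) b 1 (rank1_update N a (unit_vec 0) 1 x))"

definition gauge_op_inv :: "nat \<Rightarrow> (nat \<Rightarrow> real) \<Rightarrow> (nat \<Rightarrow> real) \<Rightarrow> (nat \<Rightarrow> real) \<Rightarrow> nat \<Rightarrow> real" where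
  "gauge_op_inv N a b = (\<lambda>x. rank1_update N a (unit_vec 0) (-1) (rank1_update N (unit_vec 0) b (-1) x))"

definition gauge_dev :: "(nat \<Rightarrow> real) \<Rightarrow> (nat \<Rightarrow> real) \<Rightarrow> nat \<Rightarrow> nat \<Rightarrow> real" where
  "gauge_dev a b i' i = (if i' = 0 then a i else 0) + (if i = 0 then b i' else 0) + b i' * a i"

definition gauge_inv_dev :: "(nat \<Rightarrow> real) \<Rightarrow> (nat \<Rightarrow> real) \<Rightarrow> real \<Rightarrow> nat \<Rightarrow> nat \<Rightarrow> real" where
  "gauge_inv_dev a b d k k' =
     (if k' = 0 then - b k else 0) + (if k = 0 then - a k' else 0) + (if k = 0 \<and> k' = 0 then d else 0)"

lemma sum_kron_left: "i \<le> R \<Longrightarrow> (\<Sum>i'\<le>R. kron i' i * f i') = f i"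
proof -
  have "(\<Sum>i'\<le>R. kron i' i * f i') = (\<Sum>i'\<le>R. if i' = i then f i' else 0)"
    by (rule sum.cong) (auto simp: kron_def)
  thus "i \<le> R \<Longrightarrow> ?thesis" by simp
qed

lemma sum_kron_right: "i \<le> R \<Longrightarrow> (\<Sum>i'\<le>R. kron i i' * f i') = f i"
  using sum_kron_left[of i R f] by (simp add: kron_def eq_commute)

lemma sum_mult_unit_vec: "(\<Sum>m\<le>N. a m * unit_vec i m) = (if i \<le> N then a i else 0)"
  by (simp add: unit_vec_def if_distrib cong: if_cong)

lemma sum_unit_vec_mult: "(\<Sum>m\<le>N. unit_vec i m * a m) = (if i \<le> N then a i else 0)"
  using sum_mult_unit_vec[of a] by (simp add: mult.commute)

context
  fixes N :: nat and a b :: "nat \<Rightarrow> real"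
  assumes a0: "a 0 = 0" and b0: "b 0 = 0"
    and a_supp: "\<And>i. N < i \<Longrightarrow> a i = 0" and b_supp: "\<And>i. N < i \<Longrightarrow> b i = 0"
begin

lemma gauge_op_inverse:
  "bounded_op (gauge_op N a b)" "bounded_op (gauge_op_inv N a b)"
  "gauge_op_inv N a b (gauge_op N a b x) = x" "gauge_op N a b (gauge_op_inv N a b x) = x"
proof -
  have "is_l2 b" using is_l2_if_finite_support b_supp by blast
  show "bounded_op (gauge_op N a b)" unfolding gauge_op_def
    by (rule bounded_op_comp; rule bounded_op_rank1_update; rule \<open>is_l2 b\<close> is_l2_unit_vec)
  show "bounded_op (gauge_op_inv N a b)" unfolding gauge_op_inv_def
    by (rule bounded_op_comp; rule bounded_op_rank1_update; rule \<open>is_l2 b\<close> is_l2_unit_vec)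
  have "(\<Sum>m\<le>N. a m * unit_vec 0 m) = 0" "(\<Sum>m\<le>N. unit_vec 0 m * b m) = 0"
    by (simp_all add: sum_mult_unit_vec sum_unit_vec_mult a0 b0)
  note cancel = this[THEN rank1_update_cancel]
  show "gauge_op_inv N a b (gauge_op N a b x) = x"
    unfolding gauge_op_def gauge_op_inv_def using cancel[of 1] by simp
  show "gauge_op N a b (gauge_op_inv N a b x) = x"
    unfolding gauge_op_def gauge_op_inv_def using cancel[of "-1"] by simp
qed

lemma invertible_gauge_op: "invertible_op (gauge_op N a b)"
  by (rule invertible_op_if_inverse) (fact gauge_op_inverse)+

lemma op_mat_gauge_op: "op_mat (gauge_op N a b) i' i = kron i' i + gauge_dev a b i' i"
proof -
  have "(\<Sum>m\<le>N. a m * unit_vec i m) = a i" using a_supp by (simp add: sum_mult_unit_vec)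
  thus ?thesis
    unfolding op_mat_def gauge_op_def rank1_update_def
    by (simp add: sum_unit_vec_mult) (simp add: gauge_dev_def kron_def unit_vec_def a0 algebra_simps)
qed

lemma op_mat_op_inv_gauge_op:
  "op_mat (op_inv (gauge_op N a b)) k k' = kron k k' + gauge_inv_dev a b (\<Sum>m\<le>N. a m * b m) k k'"
proof -
  have "op_mat (op_inv (gauge_op N a b)) k k' = gauge_op_inv N a b (unit_vec k') k"
    unfolding op_mat_def using invertible_op_if_inverse(2)[OF gauge_op_inverse is_l2_unit_vec] by simp
  also have "\<dots> = kron k k' + gauge_inv_dev a b (\<Sum>m\<le>N. a m * b m) k k'"
  proof -
    define z where "z = rank1_update N (unit_vec 0) b (-1) (unit_vec k')"
    have z: "z = (\<lambda>t. unit_vec k' t - unit_vec k' 0 * b t)"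
      unfolding z_def rank1_update_def by (simp add: sum_unit_vec_mult fun_eq_iff)
    have "(\<Sum>m\<le>N. a m * z m) = a k' - unit_vec k' 0 * (\<Sum>m\<le>N. a m * b m)"
      using a_supp
      by (simp add: z sum_mult_unit_vec ring_distribs sum_subtractf sum_distrib_left mult.left_commute)
    thus ?thesis
      unfolding gauge_op_inv_def z_def[symmetric] rank1_update_def
      by (simp add: sum_unit_vec_mult) (simp add: z gauge_inv_dev_def kron_def unit_vec_def a0 b0)
  qed
  finally show ?thesis .
qed

lemma gauge_dev_vanish:
  assumes "\<And>i. N < i \<Longrightarrow> a i = 0" "\<And>i. N < i \<Longrightarrow> b i = 0" "N < x \<or> N < y"
  shows "gauge_dev a b x y = 0" "gauge_inv_dev a b d x y = 0"
  using assms unfolding gauge_dev_def gauge_inv_dev_def by auto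

end

section \<open>Tensors on finite boxes\<close>

definition entries :: "tensor4 \<Rightarrow> nat \<times> nat \<times> nat \<times> nat \<Rightarrow> real" where
  "entries T = (\<lambda>(i, j, k, l). T i j k l)"

definition index_box :: "nat \<Rightarrow> (nat \<times> nat \<times> nat \<times> nat) set" where
  "index_box R = {..R} \<times> {..R} \<times> {..R} \<times> {..R}"

definition box_norm :: "nat \<Rightarrow> tensor4 \<Rightarrow> real" where
  "box_norm R T = L2_set (entries T) (index_box R)"

definition tail :: "nat \<Rightarrow> tensor4 \<Rightarrow> tensor4" where
  "tail N T i j k l = (if N < i \<or> N < j \<or> N < k \<or> N < l then T i j k l else 0)"

lemma squared_entries: "(\<lambda>(i, j, k, l). (T i j k l)\<^sup>2) = (\<lambda>x. (entries T x)\<^sup>2)"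
  by (auto simp: entries_def fun_eq_iff split: prod.splits)

lemma hs_tensor_iff: "hs_tensor T \<longleftrightarrow> (\<lambda>x. (entries T x)\<^sup>2) summable_on UNIV"
  unfolding hs_tensor_def squared_entries ..

lemma hs_norm_eq: "hs_norm T = sqrt (\<Sum>\<^sub>\<infinity>x. (entries T x)\<^sup>2)"
  unfolding hs_norm_def squared_entries ..

lemma L2_set_entries_le_hs_norm: "hs_tensor T \<Longrightarrow> finite F \<Longrightarrow> L2_set (entries T) F \<le> hs_norm T"
  unfolding hs_tensor_iff hs_norm_eq by (rule L2_set_le_sqrt_infsum)

lemma L2_set_entries_reindex_le_hs_norm:
  assumes "hs_tensor T" "finite S" "inj_on \<phi> S"
  shows "L2_set (\<lambda>x. entries T (\<phi> x)) S \<le> hs_norm T"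
proof -
  have "L2_set (\<lambda>x. entries T (\<phi> x)) S = L2_set (entries T) (\<phi> ` S)"
    unfolding L2_set_def using assms(3) by (simp add: sum.reindex)
  also have "\<dots> \<le> hs_norm T" using assms(1,2) by (simp add: L2_set_entries_le_hs_norm)
  finally show ?thesis .
qed

lemma finite_box [simp]: "finite (index_box R)"
  by (simp add: index_box_def)

lemma box_norm_le_hs_norm: "hs_tensor T \<Longrightarrow> box_norm R T \<le> hs_norm T"
  unfolding box_norm_def by (simp add: L2_set_entries_le_hs_norm)

lemma box_norm_sq: "(box_norm R T)\<^sup>2 = (\<Sum>i\<le>R. \<Sum>j\<le>R. \<Sum>k\<le>R. \<Sum>l\<le>R. (T i j k l)\<^sup>2)"
  unfolding box_norm_def L2_set_def index_box_def entries_def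
  by (simp add: sum_nonneg sum.cartesian_product case_prod_beta)

lemma box_norm_nonneg: "0 \<le> box_norm R T"
  by (simp add: box_norm_def)

lemma box_norm_add: "box_norm R (\<lambda>i j k l. T i j k l + U i j k l) \<le> box_norm R T + box_norm R U"
proof -
  have "entries (\<lambda>i j k l. T i j k l + U i j k l) = (\<lambda>x. entries T x + entries U x)"
    by (auto simp: entries_def fun_eq_iff)
  thus ?thesis unfolding box_norm_def by (simp add: L2_set_triangle_ineq)
qed

lemma box_norm_scale: "box_norm R (\<lambda>i j k l. c * T i j k l) = \<bar>c\<bar> * box_norm R T"
proof -
  have "entries (\<lambda>i j k l. c * T i j k l) = (\<lambda>x. c * entries T x)"
    by (auto simp: entries_def fun_eq_iff)
  thus ?thesis unfolding box_norm_def by (simp add: L2_set_scale)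
qed

lemma box_norm_diff: "box_norm R (\<lambda>i j k l. T i j k l - U i j k l) \<le> box_norm R T + box_norm R U"
  using box_norm_add[of R T "\<lambda>i j k l. (-1) * U i j k l"] box_norm_scale[of R "-1" U] by simp

lemma box_norm_abs_mono:
  assumes "\<And>i j k l. i \<le> R \<Longrightarrow> j \<le> R \<Longrightarrow> k \<le> R \<Longrightarrow> l \<le> R \<Longrightarrow> \<bar>T i j k l\<bar> \<le> \<bar>U i j k l\<bar>"
  shows "box_norm R T \<le> box_norm R U"
  unfolding box_norm_def using assms by (intro L2_set_abs_mono) (auto simp: index_box_def entries_def)

lemma box_norm_abs: "box_norm R (\<lambda>i j k l. \<bar>T i j k l\<bar>) = box_norm R T"
  by (rule order_antisym; rule box_norm_abs_mono) simp_all

lemma box_norm_cong: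
  assumes "\<And>i j k l. i \<le> R \<Longrightarrow> j \<le> R \<Longrightarrow> k \<le> R \<Longrightarrow> l \<le> R \<Longrightarrow> T i j k l = U i j k l"
  shows "box_norm R T = box_norm R U"
  using box_norm_abs_mono[of R T U] box_norm_abs_mono[of R U T] assms by (simp add: order_antisym)

lemma abs_le_box_norm:
  assumes "i \<le> R" "j \<le> R" "k \<le> R" "l \<le> R"
  shows "\<bar>T i j k l\<bar> \<le> box_norm R T"
proof -
  have "\<bar>T i j k l\<bar> = L2_set (entries T) {(i, j, k, l)}"
    by (simp add: L2_set_def entries_def)
  also have "\<dots> \<le> box_norm R T"
    unfolding box_norm_def L2_set_def using assms
    by (intro real_sqrt_le_mono sum_mono2) (auto simp: index_box_def)
  finally show ?thesis .
qed

lemma box_norm_A_star: "box_norm R A_star = 1"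
proof -
  have "(entries A_star x)\<^sup>2 = (if x = (0, 0, 0, 0) then 1 else 0)" for x
    by (auto simp: entries_def A_star_def split: prod.splits)
  moreover have "(0, 0, 0, 0) \<in> index_box R" by (simp add: index_box_def)
  ultimately show ?thesis by (simp add: box_norm_def L2_set_def)
qed

lemma finite_subset_box: "finite F \<Longrightarrow> \<exists>R. F \<subseteq> index_box R \<and> N \<le> R"
proof -
  let ?size = "\<lambda>(i, j, k, l). i + j + k + l"
  assume "finite F"
  hence "finite (?size ` F)" by simp
  then obtain M where M: "?size ` F \<subseteq> {..M}"
    unfolding finite_nat_iff_bounded_le by (rule exE)
  have "F \<subseteq> index_box (N + M)"
  proof clarify
    fix i j k l assume "(i, j, k, l) \<in> F"
    hence "?size (i, j, k, l) \<in> ?size ` F" by (rule imageI)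
    hence "i + j + k + l \<le> M" using M by auto
    thus "(i, j, k, l) \<in> index_box (N + M)" by (simp add: index_box_def)
  qed
  thus ?thesis by (intro exI[of _ "N + M"]) simp
qed

lemma hs_tensor_if_box_norm_le:
  assumes "\<And>R. N \<le> R \<Longrightarrow> box_norm R T \<le> C"
  shows "hs_tensor T \<and> hs_norm T \<le> C"
proof -
  have "L2_set (entries T) F \<le> C" if fin: "finite F" for F
  proof -
    obtain R where R: "F \<subseteq> index_box R" "N \<le> R" using finite_subset_box[OF fin, of N] by blast
    have "L2_set (entries T) F \<le> box_norm R T"
      unfolding box_norm_def L2_set_def using R by (intro real_sqrt_le_mono sum_mono2) auto
    thus ?thesis using assms[OF R(2)] by linarith
  qed
  thus ?thesis unfolding hs_tensor_iff hs_norm_eq by (rule summable_sqrt_infsum_le_if_L2_set_le)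
qed

lemma hs_tensor_diff:
  assumes "hs_tensor T" "hs_tensor U"
  shows "hs_tensor (\<lambda>i j k l. T i j k l - U i j k l)"
proof -
  have "box_norm R (\<lambda>i j k l. T i j k l - U i j k l) \<le> hs_norm T + hs_norm U" for R
    using box_norm_diff[of R T U] box_norm_le_hs_norm[OF assms(1), of R]
      box_norm_le_hs_norm[OF assms(2), of R] by linarith
  thus ?thesis using hs_tensor_if_box_norm_le[of 0] by blast
qed

lemma hs_tensor_A_star: "hs_tensor A_star"
  using hs_tensor_if_box_norm_le[of 0 A_star 1] by (simp add: box_norm_A_star)

lemma hs_tensor_abs_mono:
  assumes "hs_tensor T" "\<And>i j k l. \<bar>U i j k l\<bar> \<le> \<bar>T i j k l\<bar>"
  shows "hs_tensor U"
proof -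
  have "box_norm R U \<le> hs_norm T" for R
    using box_norm_abs_mono[of R U T] assms(2) box_norm_le_hs_norm[OF assms(1), of R] by force
  thus ?thesis using hs_tensor_if_box_norm_le[of 0] by blast
qed

lemma one_nonzero_index_cases:
  fixes i j k l :: nat
  shows "of_bool (i \<noteq> 0) + of_bool (j \<noteq> 0) + of_bool (k \<noteq> 0) + of_bool (l \<noteq> 0) = (1::nat) \<longleftrightarrow>
   (i \<noteq> 0 \<and> j = 0 \<and> k = 0 \<and> l = 0) \<or> (i = 0 \<and> j \<noteq> 0 \<and> k = 0 \<and> l = 0) \<or>
   (i = 0 \<and> j = 0 \<and> k \<noteq> 0 \<and> l = 0) \<or> (i = 0 \<and> j = 0 \<and> k = 0 \<and> l \<noteq> 0)"
  by (cases "i = 0"; cases "j = 0"; cases "k = 0"; cases "l = 0") simp_all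

lemma abs_one_nonzero_part_le: "\<bar>one_nonzero_part T i j k l\<bar> \<le> \<bar>T i j k l\<bar>"
  by (simp add: one_nonzero_part_def)

lemma box_norm_tail_small:
  assumes "hs_tensor T" "0 < \<delta>"
  obtains N where "\<And>R. box_norm R (tail N T) \<le> \<delta>"
proof -
  let ?f = "\<lambda>x. (entries T x)\<^sup>2"
  have summable: "?f summable_on UNIV" using assms(1) hs_tensor_iff by blast
  obtain F where F: "finite F" "dist (sum ?f F) (infsum ?f UNIV) \<le> \<delta>\<^sup>2"
    using infsum_finite_approximation[OF summable, of "\<delta>\<^sup>2"] assms(2) by auto
  obtain N where N: "F \<subseteq> index_box N" using finite_subset_box[OF F(1)] by blast
  have "(box_norm R (tail N T))\<^sup>2 \<le> \<delta>\<^sup>2" for R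
  proof -
    let ?G = "index_box R - index_box N"
    have "(box_norm R (tail N T))\<^sup>2 = (\<Sum>x\<in>index_box R. if x \<in> index_box N then 0 else ?f x)"
      unfolding box_norm_def L2_set_def
      by (simp add: sum_nonneg, intro sum.cong)
         (auto simp: entries_def tail_def index_box_def not_less split: if_split_asm)
    also have "\<dots> = sum ?f ?G"
      by (rule sum.mono_neutral_cong_right) auto
    also have "\<dots> = sum ?f (?G \<union> F) - sum ?f F"
      using F(1) N by (subst sum.union_disjoint) auto
    also have "sum ?f (?G \<union> F) \<le> infsum ?f UNIV"
      using F(1) by (intro finite_sum_le_infsum[OF summable]) auto
    finally show ?thesis using F(2) by (simp add: dist_real_def)
  qed
  hence "box_norm R (tail N T) \<le> \<delta>" for R
    using assms(2) box_norm_nonneg power2_le_imp_le by simp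
  thus thesis by (rule that)
qed

section \<open>Matrices acting on the legs of a tensor\<close>

definition frob_norm :: "nat \<Rightarrow> (nat \<Rightarrow> nat \<Rightarrow> real) \<Rightarrow> real" where
  "frob_norm R X = L2_set (\<lambda>(a, b). X a b) ({..R} \<times> {..R})"

lemma frob_norm_nonneg: "0 \<le> frob_norm R X"
  by (simp add: frob_norm_def)

lemma frob_norm_sq: "(frob_norm R X)\<^sup>2 = (\<Sum>a\<le>R. \<Sum>b\<le>R. (X a b)\<^sup>2)"
  unfolding frob_norm_def L2_set_def by (simp add: sum_nonneg sum.cartesian_product case_prod_beta)

lemma frob_norm_transpose: "frob_norm R (\<lambda>a b. X b a) = frob_norm R X"
proof -
  have "(frob_norm R (\<lambda>a b. X b a))\<^sup>2 = (frob_norm R X)\<^sup>2"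
    unfolding frob_norm_sq by (rule sum.swap)
  thus ?thesis by (simp add: frob_norm_nonneg power2_eq_iff_nonneg)
qed

lemma frob_norm_add: "frob_norm R (\<lambda>a b. X a b + Y a b) \<le> frob_norm R X + frob_norm R Y"
  unfolding frob_norm_def case_prod_beta by (rule L2_set_triangle_ineq)

lemma frob_norm_eq: "frob_norm R X = sqrt (\<Sum>a\<le>R. \<Sum>b\<le>R. (X a b)\<^sup>2)"
  using frob_norm_sq[of R X] frob_norm_nonneg[of R X] by (metis real_sqrt_unique)

lemma frob_norm_row0: "frob_norm R (\<lambda>a b. if a = 0 then x b else 0) = L2_set x {..R}"
proof -
  have row: "(\<Sum>b\<le>R. (if a = 0 then x b else 0)\<^sup>2) = (if a = 0 then (\<Sum>b\<le>R. (x b)\<^sup>2) else 0)"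
    for a :: nat by simp
  show ?thesis unfolding frob_norm_eq L2_set_def by (simp only: row) simp
qed

lemma frob_norm_col0: "frob_norm R (\<lambda>a b. if b = 0 then x a else 0) = L2_set x {..R}"
  using frob_norm_transpose[of R "\<lambda>a b. if a = 0 then x b else 0"] by (simp add: frob_norm_row0)

lemma frob_norm_outer: "frob_norm R (\<lambda>a b. x a * y b) = L2_set x {..R} * L2_set y {..R}"
proof -
  have "(\<Sum>a\<le>R. \<Sum>b\<le>R. (x a * y b)\<^sup>2) = (\<Sum>a\<le>R. (x a)\<^sup>2) * (\<Sum>b\<le>R. (y b)\<^sup>2)"
    by (simp add: power_mult_distrib sum_product)
  thus ?thesis unfolding frob_norm_eq L2_set_def by (simp add: real_sqrt_mult)
qed

lemma frob_norm_corner: "frob_norm R (\<lambda>a b. if a = 0 \<and> b = 0 then d else 0) = \<bar>d\<bar>"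
proof -
  have row: "(\<Sum>b\<le>R. (if a = 0 \<and> b = 0 then d else 0)\<^sup>2) = (if a = 0 then d\<^sup>2 else 0)"
    for a :: nat by (simp add: if_distrib[of "\<lambda>x. x\<^sup>2"] cong: if_cong)
  show ?thesis unfolding frob_norm_eq by (simp only: row) simp
qed

lemma sum_sq_contract_le:
  "(\<Sum>a\<le>R. (\<Sum>a'\<le>R. X a' a * h a')\<^sup>2) \<le> (frob_norm R X)\<^sup>2 * (\<Sum>a'\<le>R. (h a')\<^sup>2)"
proof -
  have "(\<Sum>a\<le>R. (\<Sum>a'\<le>R. X a' a * h a')\<^sup>2) \<le> (\<Sum>a\<le>R. (\<Sum>a'\<le>R. (X a' a)\<^sup>2) * (\<Sum>a'\<le>R. (h a')\<^sup>2))"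
    by (intro sum_mono Cauchy_Schwarz_ineq_sum)
  also have "\<dots> = (\<Sum>a\<le>R. \<Sum>a'\<le>R. (X a' a)\<^sup>2) * (\<Sum>a'\<le>R. (h a')\<^sup>2)"
    by (simp add: sum_distrib_right)
  also have "(\<Sum>a\<le>R. \<Sum>a'\<le>R. (X a' a)\<^sup>2) = (frob_norm R X)\<^sup>2"
    unfolding frob_norm_sq by (rule sum.swap)
  finally show ?thesis .
qed

lemma sum_sq_contract_fibres_le:
  assumes "finite S"
  shows "(\<Sum>a\<le>R. \<Sum>y\<in>S. (\<Sum>a'\<le>R. X a' a * g a' y)\<^sup>2)
         \<le> (frob_norm R X)\<^sup>2 * (\<Sum>a'\<le>R. \<Sum>y\<in>S. (g a' y)\<^sup>2)"
proof -
  have "(\<Sum>a\<le>R. \<Sum>y\<in>S. (\<Sum>a'\<le>R. X a' a * g a' y)\<^sup>2) = (\<Sum>y\<in>S. \<Sum>a\<le>R. (\<Sum>a'\<le>R. X a' a * g a' y)\<^sup>2)"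
    by (rule sum.swap)
  also have "\<dots> \<le> (\<Sum>y\<in>S. (frob_norm R X)\<^sup>2 * (\<Sum>a'\<le>R. (g a' y)\<^sup>2))"
    by (intro sum_mono sum_sq_contract_le)
  also have "\<dots> = (frob_norm R X)\<^sup>2 * (\<Sum>y\<in>S. \<Sum>a'\<le>R. (g a' y)\<^sup>2)"
    by (simp add: sum_distrib_left)
  also have "(\<Sum>y\<in>S. \<Sum>a'\<le>R. (g a' y)\<^sup>2) = (\<Sum>a'\<le>R. \<Sum>y\<in>S. (g a' y)\<^sup>2)"
    by (rule sum.swap)
  finally show ?thesis .
qed

lemma box_norm_le_if_sq_le:
  "(box_norm R U)\<^sup>2 \<le> (frob_norm R X)\<^sup>2 * (box_norm R T)\<^sup>2 \<Longrightarrow> box_norm R U \<le> frob_norm R X * box_norm R T"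
  by (rule power2_le_imp_le) (simp_all add: power_mult_distrib frob_norm_nonneg box_norm_nonneg)

lemma box_norm_contract_right:
  "box_norm R (\<lambda>i j k l. \<Sum>i'\<le>R. X i' i * T i' j k l) \<le> frob_norm R X * box_norm R T"
proof (rule box_norm_le_if_sq_le)
  let ?S = "{..R} \<times> {..R} \<times> {..R}"
  define g where "g i' = (\<lambda>(j, k, l). T i' j k l)" for i'
  have triple: "(\<Sum>j\<le>R. \<Sum>k\<le>R. \<Sum>l\<le>R. f j k l) = (\<Sum>(j, k, l)\<in>?S. f j k l)" for f :: "_ \<Rightarrow> _ \<Rightarrow> _ \<Rightarrow> real"
    by (simp add: sum.cartesian_product)
  have "(box_norm R (\<lambda>i j k l. \<Sum>i'\<le>R. X i' i * T i' j k l))\<^sup>2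
        = (\<Sum>i\<le>R. \<Sum>y\<in>?S. (\<Sum>i'\<le>R. X i' i * g i' y)\<^sup>2)"
    unfolding box_norm_sq g_def triple by (simp add: case_prod_beta)
  also have "\<dots> \<le> (frob_norm R X)\<^sup>2 * (\<Sum>i'\<le>R. \<Sum>y\<in>?S. (g i' y)\<^sup>2)"
    by (rule sum_sq_contract_fibres_le) simp
  also have "(\<Sum>i'\<le>R. \<Sum>y\<in>?S. (g i' y)\<^sup>2) = (box_norm R T)\<^sup>2"
    unfolding box_norm_sq g_def triple by (simp add: case_prod_beta)
  finally show "(box_norm R (\<lambda>i j k l. \<Sum>i'\<le>R. X i' i * T i' j k l))\<^sup>2
                \<le> (frob_norm R X)\<^sup>2 * (box_norm R T)\<^sup>2" .
qed

lemma box_norm_contract_top: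
  "box_norm R (\<lambda>i j k l. \<Sum>j'\<le>R. X j' j * T i j' k l) \<le> frob_norm R X * box_norm R T"
proof (rule box_norm_le_if_sq_le)
  let ?S = "{..R} \<times> {..R}"
  define g where "g i j' = (\<lambda>(k, l). T i j' k l)" for i j'
  have pair: "(\<Sum>k\<le>R. \<Sum>l\<le>R. f k l) = (\<Sum>(k, l)\<in>?S. f k l)" for f :: "_ \<Rightarrow> _ \<Rightarrow> real"
    by (simp add: sum.cartesian_product)
  have "(box_norm R (\<lambda>i j k l. \<Sum>j'\<le>R. X j' j * T i j' k l))\<^sup>2
        = (\<Sum>i\<le>R. \<Sum>j\<le>R. \<Sum>y\<in>?S. (\<Sum>j'\<le>R. X j' j * g i j' y)\<^sup>2)"
    unfolding box_norm_sq g_def pair by (simp add: case_prod_beta)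
  also have "\<dots> \<le> (\<Sum>i\<le>R. (frob_norm R X)\<^sup>2 * (\<Sum>j'\<le>R. \<Sum>y\<in>?S. (g i j' y)\<^sup>2))"
    by (intro sum_mono sum_sq_contract_fibres_le) simp
  also have "\<dots> = (frob_norm R X)\<^sup>2 * (box_norm R T)\<^sup>2"
  proof -
    have "(\<Sum>y\<in>?S. (g i j' y)\<^sup>2) = (\<Sum>k\<le>R. \<Sum>l\<le>R. (T i j' k l)\<^sup>2)" for i j'
      unfolding g_def pair by (simp add: case_prod_beta)
    thus ?thesis unfolding box_norm_sq by (simp add: sum_distrib_left)
  qed
  finally show "(box_norm R (\<lambda>i j k l. \<Sum>j'\<le>R. X j' j * T i j' k l))\<^sup>2
                \<le> (frob_norm R X)\<^sup>2 * (box_norm R T)\<^sup>2" .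
qed

lemma box_norm_contract_left:
  "box_norm R (\<lambda>i j k l. \<Sum>k'\<le>R. X k k' * T i j k' l) \<le> frob_norm R X * box_norm R T"
proof (rule box_norm_le_if_sq_le)
  have "(box_norm R (\<lambda>i j k l. \<Sum>k'\<le>R. X k k' * T i j k' l))\<^sup>2
        = (\<Sum>i\<le>R. \<Sum>j\<le>R. \<Sum>k\<le>R. \<Sum>l\<in>{..R}. (\<Sum>k'\<le>R. (\<lambda>a b. X b a) k' k * T i j k' l)\<^sup>2)"
    by (simp add: box_norm_sq)
  also have "\<dots> \<le> (\<Sum>i\<le>R. \<Sum>j\<le>R. (frob_norm R (\<lambda>a b. X b a))\<^sup>2 * (\<Sum>k'\<le>R. \<Sum>l\<in>{..R}. (T i j k' l)\<^sup>2))"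
    by (intro sum_mono sum_sq_contract_fibres_le) simp
  also have "\<dots> = (frob_norm R X)\<^sup>2 * (box_norm R T)\<^sup>2"
    unfolding box_norm_sq frob_norm_transpose[of R X] by (simp add: sum_distrib_left)
  finally show "(box_norm R (\<lambda>i j k l. \<Sum>k'\<le>R. X k k' * T i j k' l))\<^sup>2
                \<le> (frob_norm R X)\<^sup>2 * (box_norm R T)\<^sup>2" .
qed

lemma box_norm_contract_bottom:
  "box_norm R (\<lambda>i j k l. \<Sum>l'\<le>R. X l l' * T i j k l') \<le> frob_norm R X * box_norm R T"
proof (rule box_norm_le_if_sq_le)
  have "(box_norm R (\<lambda>i j k l. \<Sum>l'\<le>R. X l l' * T i j k l'))\<^sup>2
        = (\<Sum>i\<le>R. \<Sum>j\<le>R. \<Sum>k\<le>R. \<Sum>l\<le>R. (\<Sum>l'\<le>R. (\<lambda>a b. X b a) l' l * T i j k l')\<^sup>2)"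
    by (simp add: box_norm_sq)
  also have "\<dots> \<le> (\<Sum>i\<le>R. \<Sum>j\<le>R. \<Sum>k\<le>R. (frob_norm R (\<lambda>a b. X b a))\<^sup>2 * (\<Sum>l'\<le>R. (T i j k l')\<^sup>2))"
    by (intro sum_mono sum_sq_contract_le)
  also have "\<dots> = (frob_norm R X)\<^sup>2 * (box_norm R T)\<^sup>2"
    unfolding box_norm_sq frob_norm_transpose[of R X] by (simp add: sum_distrib_left)
  finally show "(box_norm R (\<lambda>i j k l. \<Sum>l'\<le>R. X l l' * T i j k l'))\<^sup>2
                \<le> (frob_norm R X)\<^sup>2 * (box_norm R T)\<^sup>2" .
qed

text \<open>The action of \<open>1 + X\<close> on one leg, with the contraction cut off at \<open>R\<close>; the inverse
  matrices act on the left and bottom legs, hence the transposed index order there.\<close>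

definition act_right :: "nat \<Rightarrow> (nat \<Rightarrow> nat \<Rightarrow> real) \<Rightarrow> tensor4 \<Rightarrow> tensor4" where
  "act_right R X T i j k l = T i j k l + (\<Sum>i'\<le>R. X i' i * T i' j k l)"

definition act_top :: "nat \<Rightarrow> (nat \<Rightarrow> nat \<Rightarrow> real) \<Rightarrow> tensor4 \<Rightarrow> tensor4" where
  "act_top R X T i j k l = T i j k l + (\<Sum>j'\<le>R. X j' j * T i j' k l)"

definition act_left :: "nat \<Rightarrow> (nat \<Rightarrow> nat \<Rightarrow> real) \<Rightarrow> tensor4 \<Rightarrow> tensor4" where
  "act_left R X T i j k l = T i j k l + (\<Sum>k'\<le>R. X k k' * T i j k' l)"

definition act_bottom :: "nat \<Rightarrow> (nat \<Rightarrow> nat \<Rightarrow> real) \<Rightarrow> tensor4 \<Rightarrow> tensor4" where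
  "act_bottom R X T i j k l = T i j k l + (\<Sum>l'\<le>R. X l l' * T i j k l')"

definition box_gauge :: "nat \<Rightarrow> (nat \<Rightarrow> nat \<Rightarrow> real) \<Rightarrow> (nat \<Rightarrow> nat \<Rightarrow> real) \<Rightarrow>
    (nat \<Rightarrow> nat \<Rightarrow> real) \<Rightarrow> (nat \<Rightarrow> nat \<Rightarrow> real) \<Rightarrow> tensor4 \<Rightarrow> tensor4" where
  "box_gauge R X1 X2 X3 X4 T = act_right R X1 (act_top R X2 (act_left R X3 (act_bottom R X4 T)))"

definition near_id :: "nat \<Rightarrow> real \<Rightarrow> (tensor4 \<Rightarrow> tensor4) \<Rightarrow> bool" where
  "near_id R y S \<longleftrightarrow> (\<forall>T. box_norm R (\<lambda>i j k l. S T i j k l - T i j k l) \<le> y * box_norm R T)"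

lemma near_id_act_right: "near_id R (frob_norm R X) (act_right R X)"
  unfolding near_id_def act_right_def by (simp add: box_norm_contract_right)

lemma near_id_act_top: "near_id R (frob_norm R X) (act_top R X)"
  unfolding near_id_def act_top_def by (simp add: box_norm_contract_top)

lemma near_id_act_left: "near_id R (frob_norm R X) (act_left R X)"
  unfolding near_id_def act_left_def by (simp add: box_norm_contract_left)

lemma near_id_act_bottom: "near_id R (frob_norm R X) (act_bottom R X)"
  unfolding near_id_def act_bottom_def by (simp add: box_norm_contract_bottom)

lemma near_id_mono:
  assumes "near_id R y S" "y \<le> z"
  shows "near_id R z S"
  unfolding near_id_def
proof
  fix T
  have "box_norm R (\<lambda>i j k l. S T i j k l - T i j k l) \<le> y * box_norm R T"
    using assms(1) unfolding near_id_def by blast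
  also have "\<dots> \<le> z * box_norm R T" using assms(2) box_norm_nonneg by (rule mult_right_mono)
  finally show "box_norm R (\<lambda>i j k l. S T i j k l - T i j k l) \<le> z * box_norm R T" .
qed

lemma near_id_comp:
  assumes S: "near_id R y S" and S': "near_id R z S'" and "0 \<le> y"
  shows "near_id R ((1 + y) * (1 + z) - 1) (\<lambda>T. S (S' T))"
  unfolding near_id_def
proof
  fix T
  have S_step: "box_norm R (\<lambda>i j k l. S (S' T) i j k l - S' T i j k l) \<le> y * box_norm R (S' T)"
    and S'_step: "box_norm R (\<lambda>i j k l. S' T i j k l - T i j k l) \<le> z * box_norm R T"
    using S S' unfolding near_id_def by blast+
  have "box_norm R (S' T) \<le> box_norm R (\<lambda>i j k l. S' T i j k l - T i j k l) + box_norm R T"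
    using box_norm_add[of R "\<lambda>i j k l. S' T i j k l - T i j k l" T] by simp
  hence "box_norm R (S' T) \<le> (1 + z) * box_norm R T"
    using S'_step by (simp add: algebra_simps)
  hence "y * box_norm R (S' T) \<le> y * ((1 + z) * box_norm R T)"
    using \<open>0 \<le> y\<close> by (rule mult_left_mono)
  moreover have "box_norm R (\<lambda>i j k l. S (S' T) i j k l - T i j k l)
        \<le> box_norm R (\<lambda>i j k l. S (S' T) i j k l - S' T i j k l)
          + box_norm R (\<lambda>i j k l. S' T i j k l - T i j k l)"
    using box_norm_add[of R "\<lambda>i j k l. S (S' T) i j k l - S' T i j k l" "\<lambda>i j k l. S' T i j k l - T i j k l"]
    by simp
  ultimately show "box_norm R (\<lambda>i j k l. S (S' T) i j k l - T i j k l)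
                   \<le> ((1 + y) * (1 + z) - 1) * box_norm R T"
    using S_step S'_step by (simp add: algebra_simps)
qed

lemma one_plus_pow4_minus_one_le:
  fixes y :: real
  assumes "0 \<le> y" "y \<le> 3/100"
  shows "(1 + y) ^ 4 - 1 \<le> 14/3 * y"
proof -
  have "y\<^sup>2 \<le> y"
    using mult_left_mono[of y 1 y] assms by (simp add: power2_eq_square)
  moreover have "y ^ 3 \<le> y\<^sup>2"
    using mult_right_mono[of y 1 "y\<^sup>2"] assms by (simp add: power2_eq_square power3_eq_cube)
  ultimately have "4 + 6 * y + 4 * y\<^sup>2 + y ^ 3 \<le> 14/3" using assms by linarith
  hence "y * (4 + 6 * y + 4 * y\<^sup>2 + y ^ 3) \<le> y * (14/3)" using assms(1) by (rule mult_left_mono)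
  thus ?thesis by (simp add: algebra_simps power2_eq_square power3_eq_cube power4_eq_xxxx)
qed

lemma near_id_box_gauge:
  assumes "frob_norm R X1 \<le> y" "frob_norm R X2 \<le> y" "frob_norm R X3 \<le> y" "frob_norm R X4 \<le> y"
  shows "near_id R ((1 + y) ^ 4 - 1) (box_gauge R X1 X2 X3 X4)"
proof -
  have "0 \<le> y" using assms(1) frob_norm_nonneg order_trans by blast
  have right: "near_id R y (act_right R X1)" and top: "near_id R y (act_top R X2)"
    and left: "near_id R y (act_left R X3)" and bottom: "near_id R y (act_bottom R X4)"
    using near_id_mono[OF near_id_act_right assms(1)] near_id_mono[OF near_id_act_top assms(2)]
      near_id_mono[OF near_id_act_left assms(3)] near_id_mono[OF near_id_act_bottom assms(4)] .
  note comp = near_id_comp[OF _ _ \<open>0 \<le> y\<close>]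
  have "near_id R ((1 + y) * ((1 + y) * ((1 + y) * (1 + y) - 1 + 1) - 1 + 1) - 1)
          (box_gauge R X1 X2 X3 X4)"
    unfolding box_gauge_def using comp[OF right comp[OF top comp[OF left bottom]]] by simp
  thus ?thesis by (simp add: power4_eq_xxxx mult.assoc)
qed

lemma act_eq_sum:
  "i \<le> R \<Longrightarrow> act_right R X T i j k l = (\<Sum>i'\<le>R. (kron i' i + X i' i) * T i' j k l)"
  "j \<le> R \<Longrightarrow> act_top R X T i j k l = (\<Sum>j'\<le>R. (kron j' j + X j' j) * T i j' k l)"
  "k \<le> R \<Longrightarrow> act_left R X T i j k l = (\<Sum>k'\<le>R. (kron k k' + X k k') * T i j k' l)"
  "l \<le> R \<Longrightarrow> act_bottom R X T i j k l = (\<Sum>l'\<le>R. (kron l l' + X l l') * T i j k l')"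
  by (simp_all add: act_right_def act_top_def act_left_def act_bottom_def ring_distribs sum.distrib
      sum_kron_left sum_kron_right)

lemma box_gauge_expand:
  assumes "i \<le> R" "j \<le> R" "k \<le> R" "l \<le> R"
  shows "box_gauge R X1 X2 X3 X4 T i j k l =
    (\<Sum>i'\<le>R. \<Sum>j'\<le>R. \<Sum>k'\<le>R. \<Sum>l'\<le>R. (kron i' i + X1 i' i) * (kron j' j + X2 j' j) *
        (kron k k' + X3 k k') * (kron l l' + X4 l l') * T i' j' k' l')"
  unfolding box_gauge_def using assms by (simp add: act_eq_sum sum_distrib_left mult.assoc)

lemma act_add:
  "act_right R X (\<lambda>i j k l. T i j k l + U i j k l) = (\<lambda>i j k l. act_right R X T i j k l + act_right R X U i j k l)"
  "act_top R X (\<lambda>i j k l. T i j k l + U i j k l) = (\<lambda>i j k l. act_top R X T i j k l + act_top R X U i j k l)"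
  "act_left R X (\<lambda>i j k l. T i j k l + U i j k l) = (\<lambda>i j k l. act_left R X T i j k l + act_left R X U i j k l)"
  "act_bottom R X (\<lambda>i j k l. T i j k l + U i j k l) = (\<lambda>i j k l. act_bottom R X T i j k l + act_bottom R X U i j k l)"
  by (simp_all add: fun_eq_iff act_right_def act_top_def act_left_def act_bottom_def ring_distribs
      sum.distrib)

lemma box_gauge_add:
  "box_gauge R X1 X2 X3 X4 (\<lambda>i j k l. T i j k l + U i j k l)
   = (\<lambda>i j k l. box_gauge R X1 X2 X3 X4 T i j k l + box_gauge R X1 X2 X3 X4 U i j k l)"
  unfolding box_gauge_def by (simp only: act_add)

definition prod_tensor :: "(nat \<Rightarrow> real) \<Rightarrow> (nat \<Rightarrow> real) \<Rightarrow> (nat \<Rightarrow> real) \<Rightarrow> (nat \<Rightarrow> real) \<Rightarrow> tensor4" where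
  "prod_tensor p q r s i j k l = p i * q j * r k * s l"

lemma A_star_eq_prod_tensor: "A_star = prod_tensor (kron 0) (kron 0) (kron 0) (kron 0)"
  by (simp add: fun_eq_iff A_star_def prod_tensor_def kron_def)

lemma act_prod_tensor:
  "act_right R X (prod_tensor p q r s) = prod_tensor (\<lambda>i. p i + (\<Sum>i'\<le>R. X i' i * p i')) q r s"
  "act_top R X (prod_tensor p q r s) = prod_tensor p (\<lambda>j. q j + (\<Sum>j'\<le>R. X j' j * q j')) r s"
  "act_left R X (prod_tensor p q r s) = prod_tensor p q (\<lambda>k. r k + (\<Sum>k'\<le>R. X k k' * r k')) s"
  "act_bottom R X (prod_tensor p q r s) = prod_tensor p q r (\<lambda>l. s l + (\<Sum>l'\<le>R. X l l' * s l'))"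
  by (simp_all add: fun_eq_iff act_right_def act_top_def act_left_def act_bottom_def prod_tensor_def
      ring_distribs sum_distrib_left sum_distrib_right mult_ac)

lemma box_gauge_A_star:
  "box_gauge R X1 X2 X3 X4 A_star =
   prod_tensor (\<lambda>i. kron 0 i + X1 0 i) (\<lambda>j. kron 0 j + X2 0 j) (\<lambda>k. kron 0 k + X3 k 0) (\<lambda>l. kron 0 l + X4 l 0)"
proof -
  have "(\<Sum>a'\<le>R. X a' * kron 0 a') = X 0" for X :: "nat \<Rightarrow> real"
    using sum_kron_left[of 0 R X] by (simp add: kron_def mult.commute)
  thus ?thesis unfolding box_gauge_def A_star_eq_prod_tensor act_prod_tensor by simp
qed

lemma infsum_nat_eq_sum:
  fixes f :: "nat \<Rightarrow> real"
  assumes "\<And>n. R < n \<Longrightarrow> f n = 0"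
  shows "(\<Sum>\<^sub>\<infinity>n. f n) = (\<Sum>n\<le>R. f n)"
proof -
  have "(\<Sum>\<^sub>\<infinity>n. f n) = infsum f {..R}"
    by (rule infsum_cong_neutral) (use assms in \<open>auto simp: not_le\<close>)
  thus ?thesis by simp
qed

lemma gauge_eq_box_gauge:
  assumes mat: "\<And>a b. op_mat Gh a b = kron a b + X1 a b" "\<And>a b. op_mat Gv a b = kron a b + X2 a b"
      "\<And>a b. op_mat (op_inv Gh) a b = kron a b + X3 a b"
      "\<And>a b. op_mat (op_inv Gv) a b = kron a b + X4 a b"
    and supp: "\<And>a b. N < a \<or> N < b \<Longrightarrow> X1 a b = 0" "\<And>a b. N < a \<or> N < b \<Longrightarrow> X2 a b = 0"
      "\<And>a b. N < a \<or> N < b \<Longrightarrow> X3 a b = 0" "\<And>a b. N < a \<or> N < b \<Longrightarrow> X4 a b = 0"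
    and "N \<le> R" and idx: "i \<le> R" "j \<le> R" "k \<le> R" "l \<le> R"
  shows "gauge Gh Gv A i j k l = box_gauge R X1 X2 X3 X4 A i j k l"
proof -
  define F where "F i' j' k' l' = (kron i' i + X1 i' i) * (kron j' j + X2 j' j) *
      (kron k k' + X3 k k') * (kron l l' + X4 l l') * A i' j' k' l'" for i' j' k' l'
  have "R < i' \<Longrightarrow> kron i' i + X1 i' i = 0" "R < j' \<Longrightarrow> kron j' j + X2 j' j = 0"
    "R < k' \<Longrightarrow> kron k k' + X3 k k' = 0" "R < l' \<Longrightarrow> kron l l' + X4 l l' = 0" for i' j' k' l'
    using \<open>N \<le> R\<close> idx supp(1)[of i' i] supp(2)[of j' j] supp(3)[of k k'] supp(4)[of l l']
    by (simp_all add: kron_def)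
  hence vanish: "F i' j' k' l' = 0" if "R < i' \<or> R < j' \<or> R < k' \<or> R < l'" for i' j' k' l'
    using that by (elim disjE) (simp_all add: F_def)
  have "gauge Gh Gv A i j k l = (\<Sum>\<^sub>\<infinity>i'. \<Sum>\<^sub>\<infinity>j'. \<Sum>\<^sub>\<infinity>k'. \<Sum>\<^sub>\<infinity>l'. F i' j' k' l')"
    unfolding gauge_def mat F_def ..
  also have "\<dots> = (\<Sum>i'\<le>R. \<Sum>j'\<le>R. \<Sum>k'\<le>R. \<Sum>l'\<le>R. F i' j' k' l')"
  proof -
    have "(\<Sum>\<^sub>\<infinity>l'. F i' j' k' l') = (\<Sum>l'\<le>R. F i' j' k' l')" for i' j' k'
      by (rule infsum_nat_eq_sum) (simp add: vanish)
    moreover have "(\<Sum>\<^sub>\<infinity>k'. \<Sum>l'\<le>R. F i' j' k' l') = (\<Sum>k'\<le>R. \<Sum>l'\<le>R. F i' j' k' l')" for i' j'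
      by (rule infsum_nat_eq_sum) (simp add: vanish)
    moreover have "(\<Sum>\<^sub>\<infinity>j'. \<Sum>k'\<le>R. \<Sum>l'\<le>R. F i' j' k' l')
                   = (\<Sum>j'\<le>R. \<Sum>k'\<le>R. \<Sum>l'\<le>R. F i' j' k' l')" for i'
      by (rule infsum_nat_eq_sum) (simp add: vanish)
    moreover have "(\<Sum>\<^sub>\<infinity>i'. \<Sum>j'\<le>R. \<Sum>k'\<le>R. \<Sum>l'\<le>R. F i' j' k' l')
                   = (\<Sum>i'\<le>R. \<Sum>j'\<le>R. \<Sum>k'\<le>R. \<Sum>l'\<le>R. F i' j' k' l')"
      by (rule infsum_nat_eq_sum) (simp add: vanish)
    ultimately show ?thesis by simp
  qed
  also have "\<dots> = box_gauge R X1 X2 X3 X4 A i j k l"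
    unfolding F_def using idx by (rule box_gauge_expand[symmetric])
  finally show ?thesis .
qed

section \<open>Gauge fixing a tensor close to \<open>A_star\<close>\<close>

definition trunc :: "nat \<Rightarrow> (nat \<Rightarrow> real) \<Rightarrow> nat \<Rightarrow> real" where
  "trunc N f x = (if 1 \<le> x \<and> x \<le> N then f x else 0)"

lemma trunc_vanish: "trunc N f 0 = 0" "N < x \<Longrightarrow> trunc N f x = 0"
  unfolding trunc_def by auto

lemma frob_norm_gauge_dev:
  "frob_norm R (gauge_dev a b) \<le> L2_set a {..R} + L2_set b {..R} + L2_set b {..R} * L2_set a {..R}"
proof -
  have "frob_norm R (gauge_dev a b)
        \<le> frob_norm R (\<lambda>i' i. (if i' = 0 then a i else 0) + (if i = 0 then b i' else 0))
          + frob_norm R (\<lambda>i' i. b i' * a i)"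
    unfolding gauge_dev_def by (rule frob_norm_add)
  also have "\<dots> \<le> frob_norm R (\<lambda>i' i. if i' = 0 then a i else 0)
          + frob_norm R (\<lambda>i' i. if i = 0 then b i' else 0) + frob_norm R (\<lambda>i' i. b i' * a i)"
    by (intro add_right_mono frob_norm_add)
  finally show ?thesis by (simp add: frob_norm_row0 frob_norm_col0 frob_norm_outer)
qed

lemma frob_norm_gauge_inv_dev:
  "frob_norm R (gauge_inv_dev a b d) \<le> L2_set b {..R} + L2_set a {..R} + \<bar>d\<bar>"
proof -
  have "frob_norm R (gauge_inv_dev a b d)
        \<le> frob_norm R (\<lambda>k k'. (if k' = 0 then - b k else 0) + (if k = 0 then - a k' else 0))
          + frob_norm R (\<lambda>k k'. if k = 0 \<and> k' = 0 then d else 0)"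
    unfolding gauge_inv_dev_def by (rule frob_norm_add)
  also have "\<dots> \<le> frob_norm R (\<lambda>k k'. if k' = 0 then - b k else 0)
          + frob_norm R (\<lambda>k k'. if k = 0 then - a k' else 0)
          + frob_norm R (\<lambda>k k'. if k = 0 \<and> k' = 0 then d else 0)"
    by (intro add_right_mono frob_norm_add)
  finally show ?thesis by (simp add: frob_norm_row0 frob_norm_col0 frob_norm_corner L2_set_def)
qed

locale gauge_fixing =
  fixes A :: tensor4 and \<beta> :: real and N :: nat
  assumes hs_A: "hs_tensor A" and A_0000: "A 0 0 0 0 = 1"
    and dev_le: "hs_norm (\<lambda>i j k l. A i j k l - A_star i j k l) \<le> \<beta>"
    and \<beta>_pos: "0 < \<beta>" and \<beta>_small: "\<beta> \<le> 1/100"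
    and tail_small: "\<And>R. box_norm R (tail N (one_nonzero_part A)) \<le> \<beta>\<^sup>2"
begin

definition B :: tensor4 where "B = (\<lambda>i j k l. A i j k l - A_star i j k l)"

definition ah :: "nat \<Rightarrow> real" where "ah = trunc N (\<lambda>x. - A x 0 0 0)"
definition av :: "nat \<Rightarrow> real" where "av = trunc N (\<lambda>x. - A 0 x 0 0)"
definition bh :: "nat \<Rightarrow> real" where "bh = trunc N (\<lambda>x. A 0 0 x 0)"
definition bv :: "nat \<Rightarrow> real" where "bv = trunc N (\<lambda>x. A 0 0 0 x)"

definition dh :: real where "dh = (\<Sum>m\<le>N. ah m * bh m)"
definition dv :: real where "dv = (\<Sum>m\<le>N. av m * bv m)"

definition Gh :: "(nat \<Rightarrow> real) \<Rightarrow> nat \<Rightarrow> real" where "Gh = gauge_op N ah bh"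
definition Gv :: "(nat \<Rightarrow> real) \<Rightarrow> nat \<Rightarrow> real" where "Gv = gauge_op N av bv"

definition gauged :: "nat \<Rightarrow> tensor4 \<Rightarrow> tensor4" where
  "gauged R = box_gauge R (gauge_dev ah bh) (gauge_dev av bv) (gauge_inv_dev ah bh dh) (gauge_inv_dev av bv dv)"

lemma gauge_vectors_vanish:
  "ah 0 = 0" "av 0 = 0" "bh 0 = 0" "bv 0 = 0"
  "N < x \<Longrightarrow> ah x = 0" "N < x \<Longrightarrow> av x = 0" "N < x \<Longrightarrow> bh x = 0" "N < x \<Longrightarrow> bv x = 0"
  by (simp_all add: ah_def av_def bh_def bv_def trunc_vanish)

lemma invertible_Gh_Gv: "invertible_op Gh" "invertible_op Gv"
  unfolding Gh_def Gv_def by (rule invertible_gauge_op; simp add: gauge_vectors_vanish)+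

lemma gauge_eq_gauged:
  assumes "N \<le> R" "i \<le> R" "j \<le> R" "k \<le> R" "l \<le> R"
  shows "gauge Gh Gv A i j k l = gauged R A i j k l"
  unfolding gauged_def Gh_def Gv_def dh_def dv_def
  by (rule gauge_eq_box_gauge[where N = N])
     (auto simp: assms op_mat_gauge_op op_mat_op_inv_gauge_op gauge_vectors_vanish
       intro: gauge_dev_vanish gauge_vectors_vanish)

lemma hs_B: "hs_tensor B"
  unfolding B_def by (rule hs_tensor_diff[OF hs_A hs_tensor_A_star])

lemma hs_norm_B: "hs_norm B \<le> \<beta>"
  unfolding B_def by (rule dev_le)

lemma box_norm_B: "box_norm R B \<le> \<beta>"
  using box_norm_le_hs_norm[OF hs_B, of R] hs_norm_B by linarith

lemma B_eq_A: "i \<noteq> 0 \<or> j \<noteq> 0 \<or> k \<noteq> 0 \<or> l \<noteq> 0 \<Longrightarrow> B i j k l = A i j k l"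
  by (auto simp: B_def A_star_def)

lemma L2_set_gauge_vectors_le:
  "L2_set ah {..R} \<le> \<beta>" "L2_set av {..R} \<le> \<beta>" "L2_set bh {..R} \<le> \<beta>" "L2_set bv {..R} \<le> \<beta>"
proof -
  have bound: "L2_set v {..R} \<le> \<beta>" if "inj \<phi>" "\<And>x. \<bar>v x\<bar> \<le> \<bar>entries B (\<phi> x)\<bar>" for v \<phi>
  proof -
    have "L2_set v {..R} \<le> L2_set (\<lambda>x. entries B (\<phi> x)) {..R}"
      by (rule L2_set_abs_mono) (rule that(2))
    also have "\<dots> \<le> hs_norm B"
      by (rule L2_set_entries_reindex_le_hs_norm[OF hs_B finite_atMost inj_on_subset[OF that(1)]]) simp
    finally show ?thesis using hs_norm_B by linarith
  qed
  have entry: "\<bar>trunc N f x\<bar> \<le> \<bar>g x\<bar>" if "\<And>x. x \<noteq> 0 \<Longrightarrow> \<bar>f x\<bar> = \<bar>g x\<bar>" for f g :: "nat \<Rightarrow> real" and x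
    using that[of x] by (simp add: trunc_def)
  show "L2_set ah {..R} \<le> \<beta>" unfolding ah_def
    by (rule bound[of "\<lambda>x. (x, 0, 0, 0)"]) (auto simp: inj_def entries_def B_eq_A intro!: entry)
  show "L2_set av {..R} \<le> \<beta>" unfolding av_def
    by (rule bound[of "\<lambda>x. (0, x, 0, 0)"]) (auto simp: inj_def entries_def B_eq_A intro!: entry)
  show "L2_set bh {..R} \<le> \<beta>" unfolding bh_def
    by (rule bound[of "\<lambda>x. (0, 0, x, 0)"]) (auto simp: inj_def entries_def B_eq_A intro!: entry)
  show "L2_set bv {..R} \<le> \<beta>" unfolding bv_def
    by (rule bound[of "\<lambda>x. (0, 0, 0, x)"]) (auto simp: inj_def entries_def B_eq_A intro!: entry)
qed

lemma abs_dh_dv: "\<bar>dh\<bar> \<le> \<beta>\<^sup>2" "\<bar>dv\<bar> \<le> \<beta>\<^sup>2"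
proof -
  have "\<bar>\<Sum>m\<le>N. u m * v m\<bar> \<le> \<beta>\<^sup>2" if "L2_set u {..N} \<le> \<beta>" "L2_set v {..N} \<le> \<beta>" for u v
  proof -
    have "\<bar>\<Sum>m\<le>N. u m * v m\<bar> \<le> (\<Sum>m\<le>N. \<bar>u m\<bar> * \<bar>v m\<bar>)"
      by (rule order_trans[OF sum_abs]) (simp add: abs_mult)
    also have "\<dots> \<le> L2_set u {..N} * L2_set v {..N}" by (rule L2_set_mult_ineq)
    also have "\<dots> \<le> \<beta> * \<beta>" using that \<beta>_pos by (intro mult_mono) auto
    finally show ?thesis by (simp add: power2_eq_square)
  qed
  thus "\<bar>dh\<bar> \<le> \<beta>\<^sup>2" "\<bar>dv\<bar> \<le> \<beta>\<^sup>2" unfolding dh_def dv_def using L2_set_gauge_vectors_le by blast+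
qed

lemma near_id_gauged: "near_id R (14 * \<beta>) (gauged R)"
proof -
  have "\<beta> * \<beta> \<le> \<beta>" using \<beta>_pos \<beta>_small by (simp add: mult_left_le)
  hence small: "x + y + z \<le> 3 * \<beta>" if "x \<le> \<beta>" "y \<le> \<beta>" "z \<le> \<beta> * \<beta>" for x y z :: real
    using that by linarith
  have products: "L2_set bh {..R} * L2_set ah {..R} \<le> \<beta> * \<beta>"
    "L2_set bv {..R} * L2_set av {..R} \<le> \<beta> * \<beta>"
    using L2_set_gauge_vectors_le \<beta>_pos by (auto intro!: mult_mono)
  have "frob_norm R (gauge_dev ah bh) \<le> 3 * \<beta>" "frob_norm R (gauge_dev av bv) \<le> 3 * \<beta>"
    "frob_norm R (gauge_inv_dev ah bh dh) \<le> 3 * \<beta>" "frob_norm R (gauge_inv_dev av bv dv) \<le> 3 * \<beta>"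
    using abs_dh_dv L2_set_gauge_vectors_le products
    by (auto intro!: order_trans[OF frob_norm_gauge_dev] order_trans[OF frob_norm_gauge_inv_dev] small
        simp: power2_eq_square)
  moreover have "(1 + 3 * \<beta>) ^ 4 - 1 \<le> 14 * \<beta>"
    using one_plus_pow4_minus_one_le[of "3 * \<beta>"] \<beta>_pos \<beta>_small by simp
  ultimately show ?thesis unfolding gauged_def by (intro near_id_mono[OF near_id_box_gauge])
qed

lemma box_norm_gauged_B_minus_B: "box_norm R (\<lambda>i j k l. gauged R B i j k l - B i j k l) \<le> 14 * \<beta>\<^sup>2"
proof -
  have "box_norm R (\<lambda>i j k l. gauged R B i j k l - B i j k l) \<le> 14 * \<beta> * box_norm R B"
    using near_id_gauged unfolding near_id_def by blast
  also have "\<dots> \<le> 14 * \<beta> * \<beta>" using box_norm_B \<beta>_pos by (intro mult_left_mono) auto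
  finally show ?thesis by (simp add: power2_eq_square)
qed

lemma A_split: "A = (\<lambda>i j k l. A_star i j k l + B i j k l)"
  by (simp add: B_def)

lemma gauged_A: "gauged R A i j k l = gauged R A_star i j k l + gauged R B i j k l"
  by (subst A_split) (simp add: gauged_def box_gauge_add)

lemma gauged_A_star:
  "gauged R A_star = prod_tensor (\<lambda>i. kron 0 i + ah i) (\<lambda>j. kron 0 j + av j)
     (\<lambda>k. (1 + dh) * kron 0 k - bh k) (\<lambda>l. (1 + dv) * kron 0 l - bv l)"
proof -
  have "(\<lambda>i. kron 0 i + gauge_dev a b 0 i) = (\<lambda>i. kron 0 i + a i)" if "b 0 = 0" for a b
    using that by (auto simp: fun_eq_iff gauge_dev_def)
  moreover have "(\<lambda>k. kron 0 k + gauge_inv_dev a b d k 0) = (\<lambda>k. (1 + d) * kron 0 k - b k)"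
    if "a 0 = 0" for a b d
    using that by (auto simp: fun_eq_iff gauge_inv_dev_def kron_def)
  ultimately show ?thesis unfolding gauged_def box_gauge_A_star by (simp add: gauge_vectors_vanish)
qed

lemma abs_dh_mult_dv: "\<bar>dh * dv\<bar> \<le> \<beta>\<^sup>2"
proof -
  have "\<bar>dh * dv\<bar> \<le> \<beta>\<^sup>2 * \<beta>\<^sup>2" unfolding abs_mult using abs_dh_dv by (intro mult_mono) auto
  also have "\<dots> \<le> \<beta>\<^sup>2 * 1" using \<beta>_pos \<beta>_small by (intro mult_left_mono) (auto simp: power_le_one)
  finally show ?thesis by simp
qed

definition gauge_corner :: real where "gauge_corner = gauge Gh Gv A 0 0 0 0"

lemma abs_gauge_corner_minus_one: "\<bar>gauge_corner - 1\<bar> \<le> 17 * \<beta>\<^sup>2"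
proof -
  let ?E = "\<lambda>i j k l. gauged N B i j k l - B i j k l"
  have "gauge_corner - 1 = dh + dv + dh * dv + ?E 0 0 0 0"
    using gauge_eq_gauged[of N 0 0 0 0] unfolding gauge_corner_def gauged_A gauged_A_star
    by (simp add: prod_tensor_def kron_def gauge_vectors_vanish B_def A_star_def A_0000 algebra_simps)
  moreover have "\<bar>?E 0 0 0 0\<bar> \<le> 14 * \<beta>\<^sup>2"
    using abs_le_box_norm[of 0 N 0 0 0 ?E] box_norm_gauged_B_minus_B[of N] by simp
  ultimately show ?thesis using abs_dh_dv abs_dh_mult_dv by linarith
qed

text \<open>The first-order cancellation: by the choice of \<open>ah, av, bh, bv\<close>, the one-nonzero
  entries of the gauged \<open>A_star\<close> are those of \<open>B\<close> inside \<open>{..N}\<^sup>4\<close>, negated and rescaled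
  by a factor \<open>1 + O(\<beta>\<^sup>2)\<close>.\<close>

lemma gauged_A_star_one_nonzero:
  assumes "of_bool (i \<noteq> 0) + of_bool (j \<noteq> 0) + of_bool (k \<noteq> 0) + of_bool (l \<noteq> 0) = (1::nat)"
  obtains \<gamma> where "\<bar>1 - \<gamma>\<bar> \<le> 3 * \<beta>\<^sup>2"
    "gauged R A_star i j k l = - \<gamma> * (if i \<le> N \<and> j \<le> N \<and> k \<le> N \<and> l \<le> N then B i j k l else 0)"
proof -
  have coeff: "\<bar>1 - (1 + dh) * (1 + dv)\<bar> \<le> 3 * \<beta>\<^sup>2" "\<bar>1 - (1 + dv)\<bar> \<le> 3 * \<beta>\<^sup>2"
    "\<bar>1 - (1 + dh)\<bar> \<le> 3 * \<beta>\<^sup>2"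
    using abs_dh_dv abs_dh_mult_dv by (auto simp: algebra_simps)
  note simps = gauged_A_star prod_tensor_def kron_def gauge_vectors_vanish(1-4) trunc_def B_eq_A
  from assms[unfolded one_nonzero_index_cases] show thesis
  proof (elim disjE conjE)
    assume "i \<noteq> 0" "j = 0" "k = 0" "l = 0"
    thus thesis by (intro that[OF coeff(1)]) (simp add: simps ah_def)
  next
    assume "i = 0" "j \<noteq> 0" "k = 0" "l = 0"
    thus thesis by (intro that[OF coeff(1)]) (simp add: simps av_def)
  next
    assume "i = 0" "j = 0" "k \<noteq> 0" "l = 0"
    thus thesis by (intro that[OF coeff(2)]) (simp add: simps bh_def algebra_simps)
  next
    assume "i = 0" "j = 0" "k = 0" "l \<noteq> 0"
    thus thesis by (intro that[OF coeff(3)]) (simp add: simps bv_def algebra_simps)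
  qed
qed

lemma abs_one_nonzero_gauged_A_star_plus_B:
  "\<bar>one_nonzero_part (\<lambda>i j k l. gauged R A_star i j k l + B i j k l) i j k l\<bar>
   \<le> 3 * \<beta>\<^sup>2 * \<bar>B i j k l\<bar> + \<bar>tail N (one_nonzero_part A) i j k l\<bar>"
proof (cases "of_bool (i \<noteq> 0) + of_bool (j \<noteq> 0) + of_bool (k \<noteq> 0) + of_bool (l \<noteq> 0) = (1::nat)")
  case False
  thus ?thesis by (simp add: one_nonzero_part_def)
next
  case one: True
  then obtain \<gamma> where \<gamma>: "\<bar>1 - \<gamma>\<bar> \<le> 3 * \<beta>\<^sup>2"
    "gauged R A_star i j k l = - \<gamma> * (if i \<le> N \<and> j \<le> N \<and> k \<le> N \<and> l \<le> N then B i j k l else 0)"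
    by (rule gauged_A_star_one_nonzero)
  show ?thesis
  proof (cases "i \<le> N \<and> j \<le> N \<and> k \<le> N \<and> l \<le> N")
    case True
    hence "one_nonzero_part (\<lambda>i j k l. gauged R A_star i j k l + B i j k l) i j k l = (1 - \<gamma>) * B i j k l"
      using one \<gamma>(2) by (simp add: one_nonzero_part_def algebra_simps)
    moreover have "\<bar>(1 - \<gamma>) * B i j k l\<bar> \<le> 3 * \<beta>\<^sup>2 * \<bar>B i j k l\<bar>"
      unfolding abs_mult using \<gamma>(1) by (rule mult_right_mono) simp
    ultimately show ?thesis by (simp add: add_increasing2)
  next
    case False
    have "i \<noteq> 0 \<or> j \<noteq> 0 \<or> k \<noteq> 0 \<or> l \<noteq> 0" using one unfolding one_nonzero_index_cases by auto
    hence "one_nonzero_part (\<lambda>i j k l. gauged R A_star i j k l + B i j k l) i j k l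
           = tail N (one_nonzero_part A) i j k l"
      using one \<gamma>(2) False by (simp add: one_nonzero_part_def tail_def B_eq_A not_le)
    thus ?thesis by simp
  qed
qed

lemma box_norm_one_nonzero_gauged_A: "box_norm R (one_nonzero_part (gauged R A)) \<le> 16 * \<beta>\<^sup>2"
proof -
  let ?W = "\<lambda>i j k l. gauged R A_star i j k l + B i j k l"
  let ?E = "\<lambda>i j k l. gauged R B i j k l - B i j k l"
  have "one_nonzero_part (gauged R A)
        = (\<lambda>i j k l. one_nonzero_part ?W i j k l + one_nonzero_part ?E i j k l)"
    by (simp add: fun_eq_iff one_nonzero_part_def gauged_A)
  hence "box_norm R (one_nonzero_part (gauged R A))
         \<le> box_norm R (one_nonzero_part ?W) + box_norm R (one_nonzero_part ?E)"
    by (simp only: box_norm_add)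
  moreover have "box_norm R (one_nonzero_part ?W) \<le> 3 * \<beta>\<^sup>2 * \<beta> + \<beta>\<^sup>2"
  proof -
    have "box_norm R (one_nonzero_part ?W)
          \<le> box_norm R (\<lambda>i j k l. 3 * \<beta>\<^sup>2 * \<bar>B i j k l\<bar> + \<bar>tail N (one_nonzero_part A) i j k l\<bar>)"
      by (rule box_norm_abs_mono) (use abs_one_nonzero_gauged_A_star_plus_B in \<open>auto intro: order_trans\<close>)
    also have "\<dots> \<le> box_norm R (\<lambda>i j k l. 3 * \<beta>\<^sup>2 * \<bar>B i j k l\<bar>)
                    + box_norm R (\<lambda>i j k l. \<bar>tail N (one_nonzero_part A) i j k l\<bar>)"
      by (rule box_norm_add)
    also have "\<dots> = 3 * \<beta>\<^sup>2 * box_norm R B + box_norm R (tail N (one_nonzero_part A))"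
      by (simp only: box_norm_scale box_norm_abs) simp
    also have "\<dots> \<le> 3 * \<beta>\<^sup>2 * \<beta> + \<beta>\<^sup>2"
      using box_norm_B tail_small by (intro add_mono mult_left_mono) auto
    finally show ?thesis .
  qed
  moreover have "box_norm R (one_nonzero_part ?E) \<le> box_norm R ?E"
    by (rule box_norm_abs_mono) (rule abs_one_nonzero_part_le)
  moreover have "3 * \<beta>\<^sup>2 * \<beta> \<le> \<beta>\<^sup>2"
    using mult_left_mono[of "3 * \<beta>" 1 "\<beta>\<^sup>2"] \<beta>_small by (simp add: mult_ac)
  ultimately show ?thesis using box_norm_gauged_B_minus_B[of R] by linarith
qed

definition A_normalized :: tensor4 where "A_normalized = (\<lambda>i j k l. gauge Gh Gv A i j k l / gauge_corner)"

lemma gauge_corner_bounds: "1/2 \<le> gauge_corner" "\<bar>1 / gauge_corner\<bar> \<le> 2" "\<bar>1 / gauge_corner - 1\<bar> \<le> 34 * \<beta>\<^sup>2"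
proof -
  have "\<beta>\<^sup>2 \<le> (1/100)\<^sup>2" using \<beta>_pos \<beta>_small by (intro power_mono) auto
  thus "1/2 \<le> gauge_corner" using abs_gauge_corner_minus_one by (simp add: power2_eq_square abs_le_iff)
  thus "\<bar>1 / gauge_corner\<bar> \<le> 2" by (simp add: field_simps)
  have "\<bar>1 / gauge_corner - 1\<bar> = \<bar>gauge_corner - 1\<bar> * (1 / gauge_corner)"
    using \<open>1/2 \<le> gauge_corner\<close> by (simp add: field_simps abs_minus_commute)
  also have "\<dots> \<le> 17 * \<beta>\<^sup>2 * 2"
    using abs_gauge_corner_minus_one \<open>\<bar>1 / gauge_corner\<bar> \<le> 2\<close> \<open>1/2 \<le> gauge_corner\<close> by (intro mult_mono) auto
  finally show "\<bar>1 / gauge_corner - 1\<bar> \<le> 34 * \<beta>\<^sup>2" by simp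
qed

lemma A_normalized_eq_gauged:
  "N \<le> R \<Longrightarrow> i \<le> R \<Longrightarrow> j \<le> R \<Longrightarrow> k \<le> R \<Longrightarrow> l \<le> R \<Longrightarrow> A_normalized i j k l = gauged R A i j k l / gauge_corner"
  unfolding A_normalized_def by (simp add: gauge_eq_gauged)

lemma box_norm_A_normalized_minus_A_star:
  assumes "N \<le> R"
  shows "box_norm R (\<lambda>i j k l. A_normalized i j k l - A_star i j k l) \<le> 32 * \<beta>"
proof -
  let ?D = "\<lambda>i j k l. gauged R A i j k l - A i j k l + B i j k l"
  have "box_norm R (\<lambda>i j k l. A_normalized i j k l - A_star i j k l)
        = box_norm R (\<lambda>i j k l. 1 / gauge_corner * ?D i j k l + (1 / gauge_corner - 1) * A_star i j k l)"
    by (rule box_norm_cong) (simp add: A_normalized_eq_gauged[OF assms] B_def algebra_simps diff_divide_distrib)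
  also have "\<dots> \<le> \<bar>1 / gauge_corner\<bar> * box_norm R ?D + \<bar>1 / gauge_corner - 1\<bar>"
    using box_norm_add[of R "\<lambda>i j k l. 1 / gauge_corner * ?D i j k l" "\<lambda>i j k l. (1 / gauge_corner - 1) * A_star i j k l"]
    by (simp only: box_norm_scale box_norm_A_star) simp
  also have "\<dots> \<le> 2 * (14 * \<beta> * (1 + \<beta>) + \<beta>) + 34 * \<beta>\<^sup>2"
  proof -
    have "box_norm R A \<le> 1 + \<beta>"
      using box_norm_add[of R A_star B] box_norm_B[of R] by (simp add: box_norm_A_star flip: A_split)
    have "box_norm R (\<lambda>i j k l. gauged R A i j k l - A i j k l) \<le> 14 * \<beta> * box_norm R A"
      using near_id_gauged unfolding near_id_def by blast
    also have "\<dots> \<le> 14 * \<beta> * (1 + \<beta>)"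
      using \<open>box_norm R A \<le> 1 + \<beta>\<close> \<beta>_pos by (intro mult_left_mono) auto
    finally have "box_norm R ?D \<le> 14 * \<beta> * (1 + \<beta>) + \<beta>"
      using box_norm_add[of R "\<lambda>i j k l. gauged R A i j k l - A i j k l" B] box_norm_B[of R] by simp
    hence "\<bar>1 / gauge_corner\<bar> * box_norm R ?D \<le> 2 * (14 * \<beta> * (1 + \<beta>) + \<beta>)"
      using gauge_corner_bounds(2) by (intro mult_mono) (auto simp: box_norm_nonneg)
    thus ?thesis using gauge_corner_bounds(3) by linarith
  qed
  also have "\<dots> \<le> 32 * \<beta>"
  proof -
    have "\<beta> * \<beta> \<le> 1/100 * \<beta>" using mult_right_mono[OF \<beta>_small, of \<beta>] \<beta>_pos by simp
    moreover have "2 * (14 * \<beta> * (1 + \<beta>) + \<beta>) + 34 * \<beta>\<^sup>2 = 30 * \<beta> + 62 * (\<beta> * \<beta>)"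
      by (simp add: power2_eq_square algebra_simps)
    ultimately show ?thesis using \<beta>_pos by linarith
  qed
  finally show ?thesis .
qed

lemma box_norm_one_nonzero_A_normalized:
  assumes "N \<le> R"
  shows "box_norm R (one_nonzero_part A_normalized) \<le> 32 * \<beta>\<^sup>2"
proof -
  have "box_norm R (one_nonzero_part A_normalized)
        = box_norm R (\<lambda>i j k l. 1 / gauge_corner * one_nonzero_part (gauged R A) i j k l)"
    by (rule box_norm_cong) (simp add: A_normalized_eq_gauged[OF assms] one_nonzero_part_def)
  also have "\<dots> \<le> 2 * (16 * \<beta>\<^sup>2)"
    unfolding box_norm_scale using gauge_corner_bounds(2) box_norm_one_nonzero_gauged_A[of R]
    by (intro mult_mono) (auto simp: box_norm_nonneg)
  finally show ?thesis by simp
qed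

lemma cond_A2_A_normalized:
  assumes "32 * \<beta> \<le> K' * \<epsilon>" "32 * \<beta>\<^sup>2 \<le> K' * \<epsilon>\<^sup>2"
  shows "cond_A2 \<epsilon> K' A_normalized"
proof -
  have dev: "hs_tensor (\<lambda>i j k l. A_normalized i j k l - A_star i j k l)
             \<and> hs_norm (\<lambda>i j k l. A_normalized i j k l - A_star i j k l) \<le> 32 * \<beta>"
    by (rule hs_tensor_if_box_norm_le[of N]) (rule box_norm_A_normalized_minus_A_star)
  have "box_norm R A_normalized \<le> 32 * \<beta> + 1" if "N \<le> R" for R
    using box_norm_add[of R "\<lambda>i j k l. A_normalized i j k l - A_star i j k l" A_star]
      box_norm_A_normalized_minus_A_star[OF that] by (simp add: box_norm_A_star)
  hence "hs_tensor A_normalized" using hs_tensor_if_box_norm_le[of N] by blast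
  moreover have "A_normalized 0 0 0 0 = 1" using gauge_corner_bounds(1) by (simp add: A_normalized_def gauge_corner_def[symmetric])
  moreover have "hs_norm (one_nonzero_part A_normalized) \<le> 32 * \<beta>\<^sup>2"
    using hs_tensor_if_box_norm_le[of N] box_norm_one_nonzero_A_normalized by blast
  ultimately show ?thesis using dev assms unfolding cond_A2_def cond_A1_def by linarith
qed

end

theorem proposition1:
  fixes K :: real
  assumes "K > 0"
  shows "\<exists>K'>0. \<exists>\<epsilon>0>0. \<forall>\<epsilon> (A :: tensor4).
           0 < \<epsilon> \<and> \<epsilon> \<le> \<epsilon>0 \<and> cond_A1 \<epsilon> K A \<longrightarrow>
           (\<exists>Gh Gv. invertible_op Gh \<and> invertible_op Gv \<and>
              \<bar>gauge Gh Gv A 0 0 0 0 - 1\<bar> \<le> K' * \<epsilon>\<^sup>2 \<and>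
              cond_A2 \<epsilon> K' (\<lambda>i j k l. gauge Gh Gv A i j k l / gauge Gh Gv A 0 0 0 0))"
proof (rule exI[of _ "32 * K * (1 + K)"], intro conjI exI[of _ "1 / (100 * K)"] allI impI)
  let ?K' = "32 * K * (1 + K)"
  show "0 < ?K'" "0 < 1 / (100 * K)" using assms by simp_all
  fix \<epsilon> :: real and A :: tensor4
  assume "0 < \<epsilon> \<and> \<epsilon> \<le> 1 / (100 * K) \<and> cond_A1 \<epsilon> K A"
  hence \<epsilon>: "0 < \<epsilon>" "K * \<epsilon> \<le> 1/100" and A: "hs_tensor A" "A 0 0 0 0 = 1"
    "hs_norm (\<lambda>i j k l. A i j k l - A_star i j k l) \<le> K * \<epsilon>"
    using assms by (auto simp: cond_A1_def field_simps)
  have "0 < (K * \<epsilon>)\<^sup>2" using assms \<epsilon> by simp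
  moreover have "hs_tensor (one_nonzero_part A)"
    using A(1) abs_one_nonzero_part_le by (rule hs_tensor_abs_mono)
  ultimately obtain N where "\<And>R. box_norm R (tail N (one_nonzero_part A)) \<le> (K * \<epsilon>)\<^sup>2"
    using box_norm_tail_small by metis
  then interpret gauge_fixing A "K * \<epsilon>" N
    using A \<epsilon> assms by unfold_locales simp_all
  have "32 * (K * \<epsilon>) \<le> ?K' * \<epsilon>" "32 * (K * \<epsilon>)\<^sup>2 \<le> ?K' * \<epsilon>\<^sup>2"
    using assms \<epsilon> by (simp_all add: power2_eq_square algebra_simps)
  thus "\<exists>Gh Gv. invertible_op Gh \<and> invertible_op Gv \<and>
          \<bar>gauge Gh Gv A 0 0 0 0 - 1\<bar> \<le> ?K' * \<epsilon>\<^sup>2 \<and>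
          cond_A2 \<epsilon> ?K' (\<lambda>i j k l. gauge Gh Gv A i j k l / gauge Gh Gv A 0 0 0 0)"
    using invertible_Gh_Gv abs_gauge_corner_minus_one cond_A2_A_normalized
    unfolding gauge_corner_def A_normalized_def by (intro exI[of _ Gh] exI[of _ Gv]) auto
qed

end
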